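(* Let $j,j',j''\in[1\mathinner{.\,.}n]$ be such that $j,j''\in\mathsf{R}$, $j'\notin\mathsf{R}$, and $j<j'<j''$. Then $\mathrm{end}(j)\le j''+\tau-1$ and $j''-j\ge2\tau$.
   Context: $T\in[0\mathinner{.\,.}\sigma)^n$ with $2\le\sigma<n^{1/7}$; $\tau=\lfloor\mu\log_\sigma n\rfloor$ for a fixed positive constant $\mu<1/6$ with $\tau\ge1$. $\mathrm{per}(S)$ is the shortest period of $S$. $\mathsf{R}=\{i\in[1\mathinner{.\,.}n-3\tau+2]:\mathrm{per}(T[i\mathinner{.\,.}i+3\tau-2])\le\tau/3\}$. For $j\in\mathsf{R}$, $\mathrm{end}(j)=\min\{j'\ge j:j'\notin\mathsf{R}\}+3\tau-2$. *)

theory Defs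
  imports Complex_Main
begin

text \<open>Strings are 1-indexed: T :: nat \<Rightarrow> nat, positions 1..n.
  A fragment T[i..k] (inclusive) has period p iff 0 < p and T l = T (l+p)
  for all i \<le> l with l + p \<le> k.\<close>

definition is_period :: "(nat \<Rightarrow> nat) \<Rightarrow> nat \<Rightarrow> nat \<Rightarrow> nat \<Rightarrow> bool" where
  "is_period T i k p \<longleftrightarrow> 0 < p \<and> (\<forall>l. i \<le> l \<and> l + p \<le> k \<longrightarrow> T l = T (l + p))"

text \<open>Shortest period of the fragment T[i..k] (for i \<le> k, p = k - i + 1 is always a period).\<close>
definition per :: "(nat \<Rightarrow> nat) \<Rightarrow> nat \<Rightarrow> nat \<Rightarrow> nat" where
  "per T i k = (LEAST p. is_period T i k p)"

definition Rset :: "(nat \<Rightarrow> nat) \<Rightarrow> nat \<Rightarrow> nat \<Rightarrow> nat set" where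
  "Rset T n \<tau> = {i. 1 \<le> i \<and> i + 3 * \<tau> \<le> n + 2 \<and>
                   real (per T i (i + 3 * \<tau> - 2)) \<le> real \<tau> / 3}"

definition run_end :: "(nat \<Rightarrow> nat) \<Rightarrow> nat \<Rightarrow> nat \<Rightarrow> nat \<Rightarrow> nat" where
  "run_end T n \<tau> j = (LEAST j'. j \<le> j' \<and> j' \<notin> Rset T n \<tau>) + 3 * \<tau> - 2"

end

theory Submission
  imports Defs
begin

text \<open>Let \<open>e\<close> be the first position after \<open>j\<close> outside \<open>R\<close>, so that \<open>e - 1 \<in> R\<close>. If the
  window of \<open>j''\<close> reached far enough to the left, it would overlap the window of \<open>e - 1\<close> in at
  least \<open>p + q\<close> positions, where \<open>p, q \<le> \<tau>/3\<close> are their periods. Both periods then hold on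
  that overlap, which forces the period \<open>p\<close> of the window of \<open>e - 1\<close> to survive one more
  position to the right; hence the window of \<open>e\<close> would have period \<open>p\<close> and \<open>e\<close> would lie in
  \<open>R\<close>. So \<open>j''\<close> is at least \<open>2\<tau> - 1\<close> positions right of \<open>e\<close>, which gives both bounds.\<close>

lemma per_is_period:
  assumes "i \<le> k"
  shows "is_period T i k (per T i k)"
proof -
  have "is_period T i k (k - i + 1)"
    unfolding is_period_def by auto
  then show ?thesis
    unfolding per_def by (rule LeastI)
qed

lemma per_le: "is_period T i k p \<Longrightarrow> per T i k \<le> p"
  unfolding per_def by (rule Least_le)

lemma is_period_subfragment:
  "is_period T i k p \<Longrightarrow> i \<le> i' \<Longrightarrow> k' \<le> k \<Longrightarrow> is_period T i' k' p"
  unfolding is_period_def by auto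

lemma is_period_extend_right:
  assumes p: "is_period T i k p"
    and q: "is_period T i' (Suc k) q"
    and overlap: "i + p + q \<le> Suc k" "i' + p + q \<le> Suc k"
  shows "is_period T i (Suc k) p"
  unfolding is_period_def
proof (intro conjI allI impI)
  show "0 < p"
    using p unfolding is_period_def by simp
  fix l
  assume l: "i \<le> l \<and> l + p \<le> Suc k"
  show "T l = T (l + p)"
  proof (cases "l + p \<le> k")
    case True
    then show ?thesis
      using p l unfolding is_period_def by blast
  next
    case False
    then have l_eq: "l + p = Suc k"
      using l by simp
    have "0 < q"
      using q unfolding is_period_def by simp
    define m where "m = l - q"
    have l_m: "l = m + q" and m_ge: "i \<le> m" "i' \<le> m" and m_p: "m + p + q = Suc k"
      using overlap l_eq unfolding m_def by linarith+
    have "T l = T m"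
      using q m_ge(2) l_m l_eq unfolding is_period_def by simp
    also have "\<dots> = T (m + p)"
      using p m_ge(1) m_p \<open>0 < q\<close> unfolding is_period_def by simp
    also have "\<dots> = T (l + p)"
      using q m_ge(2) m_p l_m unfolding is_period_def by (simp add: add.commute add.left_commute)
    finally show ?thesis .
  qed
qed

lemma mem_Rset_iff:
  assumes "1 \<le> \<tau>"
  shows "i \<in> Rset T n \<tau> \<longleftrightarrow> 1 \<le> i \<and> i + 3 * \<tau> \<le> n + 2 \<and>
           (\<exists>p. is_period T i (i + 3 * \<tau> - 2) p \<and> 3 * p \<le> \<tau>)"
proof -
  have "real (per T i (i + 3 * \<tau> - 2)) \<le> real \<tau> / 3 \<longleftrightarrow>
        (\<exists>p. is_period T i (i + 3 * \<tau> - 2) p \<and> 3 * p \<le> \<tau>)"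
  proof
    assume "real (per T i (i + 3 * \<tau> - 2)) \<le> real \<tau> / 3"
    moreover have "is_period T i (i + 3 * \<tau> - 2) (per T i (i + 3 * \<tau> - 2))"
      using assms by (intro per_is_period) simp
    ultimately show "\<exists>p. is_period T i (i + 3 * \<tau> - 2) p \<and> 3 * p \<le> \<tau>"
      by (intro exI[of _ "per T i (i + 3 * \<tau> - 2)"]) linarith
  next
    assume "\<exists>p. is_period T i (i + 3 * \<tau> - 2) p \<and> 3 * p \<le> \<tau>"
    then obtain p where "is_period T i (i + 3 * \<tau> - 2) p" "3 * p \<le> \<tau>"
      by blast
    then have "3 * per T i (i + 3 * \<tau> - 2) \<le> \<tau>"
      using per_le by fastforce
    then show "real (per T i (i + 3 * \<tau> - 2)) \<le> real \<tau> / 3"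
      by linarith
  qed
  then show ?thesis
    unfolding Rset_def by simp
qed

lemma Suc_mem_Rset:
  assumes "1 \<le> \<tau>"
    and i: "i \<in> Rset T n \<tau>" and j: "j \<in> Rset T n \<tau>"
    and close: "i < j" "j < i + 2 * \<tau>"
  shows "Suc i \<in> Rset T n \<tau>"
proof -
  obtain p where p: "is_period T i (i + 3 * \<tau> - 2) p" "3 * p \<le> \<tau>"
    using i assms(1) mem_Rset_iff by blast
  obtain q where q: "is_period T j (j + 3 * \<tau> - 2) q" "3 * q \<le> \<tau>" and j_le: "j + 3 * \<tau> \<le> n + 2"
    using j assms(1) mem_Rset_iff by blast
  have "is_period T (Suc i) (i + 3 * \<tau> - 2) p"
    by (rule is_period_subfragment[OF p(1)]) simp_all
  moreover have "is_period T j (Suc (i + 3 * \<tau> - 2)) q"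
    by (rule is_period_subfragment[OF q(1)]) (use close in linarith)+
  ultimately have "is_period T (Suc i) (Suc (i + 3 * \<tau> - 2)) p"
    by (rule is_period_extend_right) (use p(2) q(2) close assms(1) in linarith)+
  moreover have "Suc (i + 3 * \<tau> - 2) = Suc i + 3 * \<tau> - 2"
    using assms(1) by simp
  ultimately show ?thesis
    unfolding mem_Rset_iff[OF assms(1)] using p(2) j_le close by auto
qed

lemma run_end_boundary:
  assumes "j \<in> Rset T n \<tau>" "j \<le> j'" "j' \<notin> Rset T n \<tau>"
  obtains e where "run_end T n \<tau> j = e + 3 * \<tau> - 2" "j < e" "e \<le> j'"
    "e \<notin> Rset T n \<tau>" "e - 1 \<in> Rset T n \<tau>"
proof -
  define e where "e = (LEAST e. j \<le> e \<and> e \<notin> Rset T n \<tau>)"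
  have e: "j \<le> e" "e \<notin> Rset T n \<tau>"
    using LeastI[of "\<lambda>e. j \<le> e \<and> e \<notin> Rset T n \<tau>" j'] assms(2,3) unfolding e_def by auto
  have "e \<le> j'"
    unfolding e_def using assms(2,3) by (simp add: Least_le)
  have "j < e"
    using e assms(1) le_neq_implies_less by blast
  have "e - 1 \<in> Rset T n \<tau>"
  proof (rule ccontr)
    assume "e - 1 \<notin> Rset T n \<tau>"
    with \<open>j < e\<close> have "j \<le> e - 1 \<and> e - 1 \<notin> Rset T n \<tau>"
      by simp
    then have "e \<le> e - 1"
      unfolding e_def by (rule Least_le)
    then show False
      using \<open>j < e\<close> by simp
  qed
  then show ?thesis
    using that e \<open>e \<le> j'\<close> \<open>j < e\<close> unfolding run_end_def e_def by blast
qed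

theorem lemma5p13:
  fixes T :: "nat \<Rightarrow> nat" and n \<sigma> \<tau> :: nat and \<mu> :: real
    and j j' j'' :: nat
  assumes alphabet: "\<forall>i\<in>{1..n}. T i < \<sigma>"
    and sigma_ge: "2 \<le> \<sigma>"
    and sigma_lt: "real \<sigma> < real n powr (1/7)"
    and mu_pos: "0 < \<mu>" and mu_lt: "\<mu> < 1/6"
    and tau_def: "\<tau> = nat \<lfloor>\<mu> * log (real \<sigma>) (real n)\<rfloor>"
    and tau_ge: "1 \<le> \<tau>"
    and j_range: "j \<in> {1..n}" "j' \<in> {1..n}" "j'' \<in> {1..n}"
    and jR: "j \<in> Rset T n \<tau>" and j''R: "j'' \<in> Rset T n \<tau>"
    and j'R: "j' \<notin> Rset T n \<tau>"
    and order: "j < j'" "j' < j''"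
  shows "run_end T n \<tau> j \<le> j'' + \<tau> - 1 \<and> j'' - j \<ge> 2 * \<tau>"
proof -
  obtain e where end_eq: "run_end T n \<tau> j = e + 3 * \<tau> - 2" and e: "j < e" "e \<le> j'"
    and e_notin: "e \<notin> Rset T n \<tau>" and pred_e: "e - 1 \<in> Rset T n \<tau>"
    using run_end_boundary[OF jR] order j'R by (metis less_imp_le)
  have "\<not> j'' < e - 1 + 2 * \<tau>"
  proof
    assume "j'' < e - 1 + 2 * \<tau>"
    then have "Suc (e - 1) \<in> Rset T n \<tau>"
      using Suc_mem_Rset[OF tau_ge pred_e j''R] e order by linarith
    then show False
      using e_notin e by simp
  qed
  then show ?thesis
    using end_eq e order tau_ge by linarith
qed

end
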